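(* Let $X$ be an infinite set and $X\subseteq Y$. Then the map $\pi:S_\infty(Y)\to I(X)$, $\pi(f)=\widehat f$, is onto if and only if $|X|\le|Y\setminus X|$.
   Context: $S_\infty(Y)$ is the group of all bijections $Y\to Y$. $I(X)$ is the set of all bijections $f:A\to B$ with $A,B\subseteq X$ (including the empty map). For $f\in S_\infty(Y)$, $\widehat f=\{(x,f(x)): x\in X,\ f(x)\in X\}\in I(X)$, i.e. the restriction of $f$ to $X\cap f^{-1}(X)$. *)

theory Defs
  imports "HOL-Library.Equipollence"
begin

text \<open>S_infinity(Y): all bijections Y to Y (values outside Y are irrelevant).\<close>
definition sym_group :: "'a set \<Rightarrow> ('a \<Rightarrow> 'a) set" where
  "sym_group Y = {f. bij_betw f Y Y}"

definition partial_bijections :: "'a set \<Rightarrow> ('a \<times> 'a) set set" where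
  "partial_bijections X =
     {R. \<exists>A B f. A \<subseteq> X \<and> B \<subseteq> X \<and> bij_betw f A B \<and> R = {(x, f x) | x. x \<in> A}}"

definition restr_hat :: "'a set \<Rightarrow> ('a \<Rightarrow> 'a) \<Rightarrow> ('a \<times> 'a) set" where
  "restr_hat X f = {(x, f x) | x. x \<in> X \<and> f x \<in> X}"

end

theory Submission
  imports Defs
begin

text \<open>
  If some permutation of \<open>Y\<close> restricts to the empty partial bijection, it maps \<open>X\<close>
  injectively into \<open>Y - X\<close>. Conversely, let \<open>Z = Y - X\<close> be at least as large as
  \<open>X\<close> (hence infinite) and split it into two disjoint parts \<open>Z\<^sub>1, Z\<^sub>2\<close>, each as
  large as \<open>Z\<close>. A partial bijection \<open>g : A \<rightarrow> B\<close> is extended by sending \<open>X - A\<close>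
  injectively into \<open>Z\<^sub>1\<close>, with image \<open>W\<close>, and \<open>Z\<close> bijectively onto
  \<open>(X - B) \<union> (Z - W)\<close>; the latter set contains \<open>Z\<^sub>2\<close> and is covered by two sets of
  size at most \<open>|Z|\<close>, so it has the size of \<open>Z\<close>.
\<close>

unbundle cardinal_syntax

lemma lepoll_iff_card_of_ordLeq: "A \<lesssim> B \<longleftrightarrow> |A| \<le>o |B|"
  unfolding lepoll_def by (simp add: card_of_ordLeq[symmetric])

lemma Un_lepoll_infinite:
  assumes "infinite Z" "S \<lesssim> Z" "T \<lesssim> Z"
  shows "S \<union> T \<lesssim> Z"
  using card_of_Un_ordLeq_infinite_Field[of "|Z|" S T] assms
  by (simp add: Field_card_of card_of_Card_order card_of_card_order_on lepoll_iff_card_of_ordLeq)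

lemma infinite_split_disjoint_copies:
  assumes "infinite Z"
  obtains Z\<^sub>1 Z\<^sub>2 where "Z\<^sub>1 \<subseteq> Z" "Z\<^sub>2 \<subseteq> Z" "Z\<^sub>1 \<inter> Z\<^sub>2 = {}" "Z \<lesssim> Z\<^sub>1" "Z \<lesssim> Z\<^sub>2"
proof -
  have "|Z <+> Z| =o |Z|"
    using card_of_Plus_infinite1[of Z Z] assms ordLeq_refl[OF card_of_Card_order] by blast
  then obtain p where p: "bij_betw p (Z <+> Z) Z"
    using card_of_ordIso by blast
  then have inj: "inj_on (p \<circ> Inl) Z" "inj_on (p \<circ> Inr) Z"
    by (auto simp: bij_betw_def inj_on_def)
  show thesis
  proof
    show "p ` Inl ` Z \<subseteq> Z" "p ` Inr ` Z \<subseteq> Z"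
      using p by (auto simp: bij_betw_def)
    show "p ` Inl ` Z \<inter> p ` Inr ` Z = {}"
      using p unfolding bij_betw_def inj_on_def by fastforce
    show "Z \<lesssim> p ` Inl ` Z" "Z \<lesssim> p ` Inr ` Z"
      using inj unfolding lepoll_def by (auto simp: image_comp)
  qed
qed

lemma empty_in_partial_bijections: "{} \<in> partial_bijections X"
  unfolding partial_bijections_def by (auto intro!: exI[of _ "{}"])

lemma lepoll_Diff_if_restr_hat_empty:
  assumes "bij_betw f Y Y" "X \<subseteq> Y" "restr_hat X f = {}"
  shows "X \<lesssim> Y - X"
proof -
  have "f ` X \<subseteq> Y - X"
    using assms unfolding restr_hat_def bij_betw_def by blast
  moreover have "inj_on f X"
    using assms(1,2) by (auto simp: bij_betw_def intro: inj_on_subset)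
  ultimately show ?thesis
    unfolding lepoll_def by blast
qed

lemma restr_hat_eq_graph:
  assumes "A \<subseteq> X" "\<And>x. x \<in> A \<Longrightarrow> f x = g x" "g ` A \<subseteq> X" "\<And>x. x \<in> X - A \<Longrightarrow> f x \<notin> X"
  shows "restr_hat X f = {(x, g x) | x. x \<in> A}"
proof -
  have "x \<in> X \<and> f x \<in> X \<longleftrightarrow> x \<in> A" for x
    using assms by blast
  then show ?thesis
    unfolding restr_hat_def using assms(2) by auto
qed

lemma partial_bijection_extends_to_permutation:
  assumes "X \<subseteq> Y" "infinite (Y - X)" "X \<lesssim> Y - X"
    and "A \<subseteq> X" "B \<subseteq> X" "bij_betw g A B"
  shows "\<exists>f. bij_betw f Y Y \<and> restr_hat X f = {(x, g x) | x. x \<in> A}"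
proof -
  define Z where "Z = Y - X"
  obtain Z\<^sub>1 Z\<^sub>2 where Zs: "Z\<^sub>1 \<subseteq> Z" "Z\<^sub>2 \<subseteq> Z" "Z\<^sub>1 \<inter> Z\<^sub>2 = {}" "Z \<lesssim> Z\<^sub>1" "Z \<lesssim> Z\<^sub>2"
    using infinite_split_disjoint_copies assms(2) unfolding Z_def by blast
  have XZ: "X \<lesssim> Z"
    using assms(3) unfolding Z_def .
  have "X - A \<lesssim> Z\<^sub>1"
    using lepoll_trans[OF lepoll_trans[OF subset_imp_lepoll XZ] Zs(4)] by blast
  then obtain e where e: "inj_on e (X - A)" "e ` (X - A) \<subseteq> Z\<^sub>1"
    unfolding lepoll_def by blast
  define W where "W = e ` (X - A)"
  define T where "T = (X - B) \<union> (Z - W)"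
  have "T \<lesssim> Z"
    unfolding T_def using assms(2) XZ Z_def
    by (intro Un_lepoll_infinite) (auto intro: lepoll_trans[OF subset_imp_lepoll])
  moreover have "Z \<lesssim> T"
    using Zs e unfolding T_def W_def by (blast intro: lepoll_trans[OF Zs(5) subset_imp_lepoll])
  ultimately obtain k where k: "bij_betw k Z T"
    using lepoll_antisym unfolding eqpoll_def by blast
  define f where "f x = (if x \<in> A then g x else if x \<in> X - A then e x else k x)" for x
  have W: "W \<subseteq> Z" "bij_betw e (X - A) W"
    using e Zs(1) unfolding W_def by (auto intro: bij_betw_imageI)
  have disj: "A \<inter> ((X - A) \<union> Z) = {}" "(X - A) \<inter> Z = {}"
      "B \<inter> (W \<union> T) = {}" "W \<inter> T = {}"
    using assms(4,5) W(1) unfolding Z_def T_def by auto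
  have "bij_betw (\<lambda>x. if x \<in> X - A then e x else k x) ((X - A) \<union> Z) (W \<union> T)"
    using bij_betw_disjoint_Un[OF W(2) k disj(2,4)] .
  then have bij: "bij_betw f (A \<union> ((X - A) \<union> Z)) (B \<union> (W \<union> T))"
    unfolding f_def using bij_betw_disjoint_Un[OF assms(6) _ disj(1,3)] by blast
  have "A \<union> ((X - A) \<union> Z) = Y" "B \<union> (W \<union> T) = Y"
    using assms(1,4,5) W(1) unfolding Z_def T_def by auto
  with bij have "bij_betw f Y Y"
    by simp
  moreover have "restr_hat X f = {(x, g x) | x. x \<in> A}"
  proof (rule restr_hat_eq_graph[OF assms(4)])
    show "f x = g x" if "x \<in> A" for x
      using that unfolding f_def by simp
    show "g ` A \<subseteq> X"
      using assms(5,6) by (simp add: bij_betw_def)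
    show "f x \<notin> X" if "x \<in> X - A" for x
      using that e Zs(1) unfolding f_def Z_def by auto
  qed
  ultimately show ?thesis
    by blast
qed

theorem proposition6p1:
  fixes X Y :: "'a set"
  assumes "infinite X" and "X \<subseteq> Y"
  shows "(\<forall>R \<in> partial_bijections X. \<exists>f \<in> sym_group Y. restr_hat X f = R)
         \<longleftrightarrow> X \<lesssim> Y - X"
proof
  assume "\<forall>R \<in> partial_bijections X. \<exists>f \<in> sym_group Y. restr_hat X f = R"
  then obtain f where "bij_betw f Y Y" "restr_hat X f = {}"
    using empty_in_partial_bijections unfolding sym_group_def by blast
  then show "X \<lesssim> Y - X"
    using lepoll_Diff_if_restr_hat_empty assms(2) by blast
next
  assume lep: "X \<lesssim> Y - X"
  then have inf: "infinite (Y - X)"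
    using assms(1) infinite_le_lepoll lepoll_trans by blast
  show "\<forall>R \<in> partial_bijections X. \<exists>f \<in> sym_group Y. restr_hat X f = R"
  proof
    fix R assume "R \<in> partial_bijections X"
    then obtain A B g where g: "A \<subseteq> X" "B \<subseteq> X" "bij_betw g A B" "R = {(x, g x) | x. x \<in> A}"
      unfolding partial_bijections_def by blast
    then obtain f where "bij_betw f Y Y" "restr_hat X f = R"
      using partial_bijection_extends_to_permutation[OF assms(2) inf lep g(1-3)] by blast
    then show "\<exists>f \<in> sym_group Y. restr_hat X f = R"
      unfolding sym_group_def by blast
  qed
qed

end
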